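(* Let $R$ be a dp-minimal integral domain with fraction field $K$ and maximal ideal $\mathfrak M$. For every prime ideal $\mathfrak p\neq\mathfrak M$ of $R$ we have $\mathfrak p:\mathfrak p=R_{\mathfrak p}$. If moreover $R$ is not a valuation ring, then $\mathfrak M^{-1}=\mathfrak M:\mathfrak M$.
   Context: Rings are commutative with identity; dp-minimal means the theory in the language of rings has dp-rank $1$ (such domains are local). For an ideal $I$ of a domain $R$ with fraction field $K$: $I:I=\{x\in K: xI\subseteq I\}$ and $I^{-1}=\{x\in K: xI\subseteq R\}$. *)

theory Defs
  imports Main "HOL-Computational_Algebra.Fraction_Field"
begin

datatype rtm = RVar nat | RZero | ROne | RAdd rtm rtm | RNeg rtm | RMul rtm rtm

datatype rfm = REq rtm rtm | RNot rfm | RAnd rfm rfm | RExists nat rfm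

fun teval :: "(nat \<Rightarrow> 'a::comm_ring_1) \<Rightarrow> rtm \<Rightarrow> 'a" where
  "teval e (RVar n) = e n"
| "teval e RZero = 0"
| "teval e ROne = 1"
| "teval e (RAdd s t) = teval e s + teval e t"
| "teval e (RNeg s) = - teval e s"
| "teval e (RMul s t) = teval e s * teval e t"

fun sat :: "(nat \<Rightarrow> 'a::comm_ring_1) \<Rightarrow> rfm \<Rightarrow> bool" where
  "sat e (REq s t) = (teval e s = teval e t)"
| "sat e (RNot f) = (\<not> sat e f)"
| "sat e (RAnd f g) = (sat e f \<and> sat e g)"
| "sat e (RExists n f) = (\<exists>a. sat (e(n := a)) f)"

text \<open>dp-minimality of the complete theory of the ring 'a: there is no ict-pattern of
  depth 2 (with the object variable x = variable 0 a single variable).  By compactness this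
  is equivalent to: for all formulas phi(x;y), psi(x;z) there is a finite bound n such that
  no n-by-n ict-array with parameters from the ring itself exists.\<close>

definition ict_array :: "'a::comm_ring_1 itself \<Rightarrow> rfm \<Rightarrow> rfm \<Rightarrow> nat \<Rightarrow> bool" where
  "ict_array _ \<phi> \<psi> n \<longleftrightarrow>
     (\<exists>(b :: nat \<Rightarrow> nat \<Rightarrow> 'a) (c :: nat \<Rightarrow> nat \<Rightarrow> 'a).
        \<forall>i<n. \<forall>j<n. \<exists>a.
          (\<forall>i'<n. sat ((b i')(0 := a)) \<phi> \<longleftrightarrow> i' = i) \<and>
          (\<forall>j'<n. sat ((c j')(0 := a)) \<psi> \<longleftrightarrow> j' = j))"

definition dp_minimal :: "'a::comm_ring_1 itself \<Rightarrow> bool" where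
  "dp_minimal T \<longleftrightarrow> (\<forall>\<phi> \<psi>. \<exists>n. \<not> ict_array T \<phi> \<psi> n)"

definition is_ideal :: "'a::comm_ring_1 set \<Rightarrow> bool" where
  "is_ideal I \<longleftrightarrow> 0 \<in> I \<and> (\<forall>x\<in>I. \<forall>y\<in>I. x + y \<in> I) \<and> (\<forall>r x. x \<in> I \<longrightarrow> r * x \<in> I)"

definition prime_ideal :: "'a::comm_ring_1 set \<Rightarrow> bool" where
  "prime_ideal P \<longleftrightarrow> is_ideal P \<and> P \<noteq> UNIV \<and> (\<forall>a b. a * b \<in> P \<longrightarrow> a \<in> P \<or> b \<in> P)"

definition maximal_ideal :: "'a::comm_ring_1 set \<Rightarrow> bool" where
  "maximal_ideal M \<longleftrightarrow> is_ideal M \<and> M \<noteq> UNIV \<and>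
     (\<forall>J. is_ideal J \<and> M \<subseteq> J \<longrightarrow> J = M \<or> J = UNIV)"

definition emb :: "'a::idom \<Rightarrow> 'a fract" where
  "emb a = Fract a 1"

definition colon :: "'a::idom fract set \<Rightarrow> 'a fract set \<Rightarrow> 'a fract set" where
  "colon I J = {x. \<forall>y\<in>J. x * y \<in> I}"

definition frac_inv :: "'a::idom set \<Rightarrow> 'a fract set" where
  "frac_inv I = colon (range emb) (emb ` I)"

definition localization :: "'a::idom set \<Rightarrow> 'a fract set" where
  "localization P = {Fract a s | a s. s \<notin> P}"

definition valuation_ring :: "'a::idom itself \<Rightarrow> bool" where
  "valuation_ring _ \<longleftrightarrow>
     (\<forall>x :: 'a fract. x \<in> range emb \<or> inverse x \<in> range emb)"

end

theory Submission
  imports Defs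
begin

text \<open>
  By dp-minimality the formula \<open>y | x - z\<close> has no large ict-pattern: for some \<open>N\<close> there
  are no \<open>a, b\<close> with \<open>N\<close> multiples of \<open>a\<close> pairwise incongruent modulo \<open>b\<close> and \<open>N\<close>
  multiples of \<open>b\<close> pairwise incongruent modulo \<open>a\<close>.  If \<open>a + b = 1\<close> with \<open>a, b\<close>
  non-units, the progressions \<open>a\<^sup>N b\<^sup>i\<close> and \<open>b\<^sup>N a\<^sup>j\<close> would form such a pattern, so \<open>R\<close> is
  local.  Hence \<open>1 - s\<^sup>k\<close> is a unit for every non-unit \<open>s\<close>, so \<open>b\<close> divides
  \<open>a s\<^sup>i - a s\<^sup>i\<^sup>'\<close> only if it divides \<open>a s\<^sup>i\<close>, and the progressions \<open>a s\<^sup>i\<close>, \<open>b s\<^sup>j\<close>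
  show that \<open>b | a s\<^sup>N\<close> or \<open>a | b s\<^sup>N\<close>.

  For a prime \<open>\<frak>p \<noteq> \<frak>M\<close> pick \<open>s \<in> \<frak>M - \<frak>p\<close>.  The dichotomy writes a fraction \<open>a/b\<close> as
  \<open>t/s\<^sup>N\<close> or as \<open>s\<^sup>N/t\<close>, and in the latter case \<open>t \<notin> \<frak>p\<close> if \<open>a/b \<in> \<frak>p:\<frak>p\<close>; with
  \<open>b := s\<^sup>N\<^sup>+\<^sup>1\<close> it also shows that every element outside \<open>\<frak>p\<close> divides every element
  of \<open>\<frak>p\<close>, whence \<open>R\<^sub>\<frak>p \<subseteq> \<frak>p:\<frak>p\<close>.  If \<open>x \<in> \<frak>M\<^sup>-\<^sup>1\<close> and \<open>x m \<notin> \<frak>M\<close> for some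
  \<open>m \<in> \<frak>M\<close>, then \<open>x m\<close> is a unit, so \<open>\<frak>M = mR\<close>; the dichotomy for \<open>s = m\<close> then
  makes divisibility total, i.e. \<open>R\<close> is a valuation ring.
\<close>

definition dvd_ict_pattern ::
    "'a::comm_ring_1 \<Rightarrow> 'a \<Rightarrow> (nat \<Rightarrow> 'a) \<Rightarrow> (nat \<Rightarrow> 'a) \<Rightarrow> nat \<Rightarrow> bool" where
  "dvd_ict_pattern a b f g n \<longleftrightarrow>
     (\<forall>i<n. a dvd f i \<and> b dvd g i) \<and>
     (\<forall>i'<n. \<forall>i<i'. \<not> b dvd f i - f i' \<and> \<not> a dvd g i - g i')"

definition dvd_diff_formula :: rfm where
  "dvd_diff_formula = RExists 3 (REq (RAdd (RVar 0) (RNeg (RVar 1))) (RMul (RVar 2) (RVar 3)))"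

lemma sat_dvd_diff_formula: "sat e dvd_diff_formula \<longleftrightarrow> e 2 dvd e 0 - e 1"
  by (auto simp: dvd_diff_formula_def dvd_def)

lemma dvd_ict_pattern_separates:
  assumes "dvd_ict_pattern a b f g n" "i < n" "i' < n"
  shows "b dvd f i - f i' \<longleftrightarrow> i = i'" and "a dvd g i - g i' \<longleftrightarrow> i = i'"
proof -
  have swap: "d dvd x - y \<longleftrightarrow> d dvd y - x" for d x y :: 'a
    by (metis dvd_minus_iff minus_diff_eq)
  show "b dvd f i - f i' \<longleftrightarrow> i = i'" "a dvd g i - g i' \<longleftrightarrow> i = i'"
    using assms unfolding dvd_ict_pattern_def
    by (metis linorder_neqE_nat swap dvd_0_right diff_self)+
qed

lemma dp_minimal_bounds_dvd_ict_patterns: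
  assumes "dp_minimal TYPE('a::comm_ring_1)"
  obtains N where "\<And>(a::'a) b f g. \<not> dvd_ict_pattern a b f g N"
proof -
  obtain N where N: "\<not> ict_array TYPE('a) dvd_diff_formula dvd_diff_formula N"
    using assms unfolding dp_minimal_def by blast
  have "\<not> dvd_ict_pattern a b f g N" for a b :: 'a and f g
  proof
    assume pattern: "dvd_ict_pattern a b f g N"
    define rows where "rows = (\<lambda>i (v::nat). if v = 1 then f i else b)"
    define cols where "cols = (\<lambda>j (v::nat). if v = 1 then g j else a)"
    \<comment> \<open>\<open>f i + g j\<close> is congruent to \<open>f i\<close> modulo \<open>b\<close> and to \<open>g j\<close> modulo \<open>a\<close>.\<close>
    have "\<exists>x. (\<forall>i'<N. sat ((rows i')(0 := x)) dvd_diff_formula \<longleftrightarrow> i' = i) \<and>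
              (\<forall>j'<N. sat ((cols j')(0 := x)) dvd_diff_formula \<longleftrightarrow> j' = j)"
      if "i < N" "j < N" for i j
    proof (intro exI conjI allI impI)
      fix i' assume "i' < N"
      have "b dvd g j" using pattern \<open>j < N\<close> unfolding dvd_ict_pattern_def by blast
      then have "b dvd f i + g j - f i' \<longleftrightarrow> b dvd f i - f i'"
        using dvd_add_left_iff[of b "g j" "f i - f i'"] by (simp add: algebra_simps)
      then show "sat ((rows i')(0 := f i + g j)) dvd_diff_formula \<longleftrightarrow> i' = i"
        using dvd_ict_pattern_separates(1)[OF pattern \<open>i < N\<close> \<open>i' < N\<close>]
        by (auto simp: sat_dvd_diff_formula rows_def)
    next
      fix j' assume "j' < N"
      have "a dvd f i" using pattern \<open>i < N\<close> unfolding dvd_ict_pattern_def by blast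
      then have "a dvd f i + g j - g j' \<longleftrightarrow> a dvd g j - g j'"
        using dvd_add_left_iff[of a "f i" "g j - g j'"] by (simp add: algebra_simps)
      then show "sat ((cols j')(0 := f i + g j)) dvd_diff_formula \<longleftrightarrow> j' = j"
        using dvd_ict_pattern_separates(2)[OF pattern \<open>j < N\<close> \<open>j' < N\<close>]
        by (auto simp: sat_dvd_diff_formula cols_def)
    qed
    then have "ict_array TYPE('a) dvd_diff_formula dvd_diff_formula N"
      unfolding ict_array_def by blast
    with N show False ..
  qed
  then show thesis by (rule that)
qed

lemma dvd_mult_unit_cancel:
  fixes u :: "'a::comm_ring_1"
  assumes "u dvd 1" "d dvd x * u"
  shows "d dvd x"
  using assms by (metis dvd_refl dvd_trans mult.right_neutral mult_dvd_mono)

lemma ideal_mem_unit_eq_UNIV: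
  assumes "is_ideal I" "u \<in> I" "u dvd 1"
  shows "I = UNIV"
proof -
  obtain v where "1 = u * v" using \<open>u dvd 1\<close> ..
  then have "r = (r * v) * u" for r by (simp add: ac_simps)
  then have "r \<in> I" for r using assms(1,2) unfolding is_ideal_def by metis
  then show ?thesis by blast
qed

lemma prime_ideal_power_memD:
  assumes "prime_ideal P" "s ^ n \<in> P"
  shows "s \<in> P"
  using assms(2)
proof (induction n)
  case 0
  then show ?case
    using assms(1) ideal_mem_unit_eq_UNIV[of P 1] by (simp add: prime_ideal_def)
next
  case (Suc n)
  then show ?case using assms(1) unfolding prime_ideal_def by auto
qed

lemma is_ideal_add_principal:
  assumes "is_ideal I"
  shows "is_ideal {m + t * r | m r. m \<in> I}"
  unfolding is_ideal_def
proof (intro conjI ballI allI impI)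
  have "0 = 0 + t * 0" "0 \<in> I" using assms by (simp_all add: is_ideal_def)
  then show "0 \<in> {m + t * r | m r. m \<in> I}" by blast
next
  fix x y assume "x \<in> {m + t * r | m r. m \<in> I}" "y \<in> {m + t * r | m r. m \<in> I}"
  then obtain m r m' r' where "x = m + t * r" "y = m' + t * r'" "m \<in> I" "m' \<in> I" by blast
  then have "x + y = (m + m') + t * (r + r')" "m + m' \<in> I"
    using assms by (simp_all add: is_ideal_def algebra_simps)
  then show "x + y \<in> {m + t * r | m r. m \<in> I}" by blast
next
  fix c x assume "x \<in> {m + t * r | m r. m \<in> I}"
  then obtain m r where "x = m + t * r" "m \<in> I" by blast
  then have "c * x = c * m + t * (c * r)" "c * m \<in> I"
    using assms by (simp_all add: is_ideal_def algebra_simps)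
  then show "c * x \<in> {m + t * r | m r. m \<in> I}" by blast
qed

lemma maximal_ideal_mem_iff_nonunit:
  fixes M :: "'a::comm_ring_1 set"
  assumes local: "\<And>a b :: 'a. a + b = 1 \<Longrightarrow> a dvd 1 \<or> b dvd 1"
    and M: "maximal_ideal M"
  shows "t \<in> M \<longleftrightarrow> \<not> t dvd 1"
proof
  have ideal: "is_ideal M" and proper: "M \<noteq> UNIV"
    using M by (auto simp: maximal_ideal_def)
  show "\<not> t dvd 1" if "t \<in> M"
    using ideal_mem_unit_eq_UNIV[OF ideal that] proper by blast
  show "t \<in> M" if "\<not> t dvd 1"
  proof (rule ccontr)
    assume "t \<notin> M"
    let ?J = "{m + t * r | m r. m \<in> M}"
    have "M \<subseteq> ?J"
    proof
      fix x assume "x \<in> M"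
      moreover have "x = x + t * 0" by simp
      ultimately show "x \<in> ?J" by blast
    qed
    then have "?J = M \<or> ?J = UNIV"
      using M is_ideal_add_principal[OF ideal] unfolding maximal_ideal_def by blast
    moreover have "t \<in> ?J"
    proof -
      have "t = 0 + t * 1" "0 \<in> M" using ideal by (simp_all add: is_ideal_def)
      then show ?thesis by blast
    qed
    ultimately have "?J = UNIV" using \<open>t \<notin> M\<close> by blast
    then have "1 \<in> ?J" by (simp only: UNIV_I)
    then obtain m r where sum: "m + t * r = 1" and "m \<in> M" by (auto dest: sym)
    have "\<not> m dvd 1"
      using ideal_mem_unit_eq_UNIV[OF ideal \<open>m \<in> M\<close>] proper by blast
    with local[OF sum] have "t * r dvd 1" by blast
    with \<open>\<not> t dvd 1\<close> show False using dvd_mult_left by blast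
  qed
qed

lemma not_dvd_power_progression_diff:
  fixes a b :: "'a::idom"
  assumes "a + b = 1" "\<not> b dvd 1" "b \<noteq> 0" "i < i'" "i' < N"
  shows "\<not> b ^ N dvd a ^ N * b ^ i - a ^ N * b ^ i'"
proof
  let ?k = "i' - i"
  assume "b ^ N dvd a ^ N * b ^ i - a ^ N * b ^ i'"
  moreover have "a ^ N * b ^ i - a ^ N * b ^ i' = b ^ i * (a ^ N * (1 - b ^ ?k))"
    using \<open>i < i'\<close> by (simp add: algebra_simps flip: power_add)
  moreover have "b ^ N = b ^ i * b ^ (N - i)"
    using assms(4,5) by (simp flip: power_add)
  ultimately have "b ^ (N - i) dvd a ^ N * (1 - b ^ ?k)"
    using \<open>b \<noteq> 0\<close> by simp
  moreover have "b dvd b ^ (N - i)"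
    using assms(4,5) by (simp add: dvd_power)
  ultimately have "b dvd a ^ N * (1 - b ^ ?k)"
    by (rule dvd_trans[rotated])
  \<comment> \<open>but \<open>a \<equiv> 1\<close> modulo \<open>b\<close>, so this product is \<open>\<equiv> 1\<close>\<close>
  moreover have "b dvd a ^ N - 1"
  proof -
    have "a - 1 = - b" using \<open>a + b = 1\<close> by (simp add: algebra_simps)
    then show ?thesis using power_diff_1_eq[of a N] by simp
  qed
  moreover have "b dvd a ^ N * b ^ ?k"
    using \<open>i < i'\<close> by (simp add: dvd_power)
  ultimately have "b dvd a ^ N * (1 - b ^ ?k) - (a ^ N - 1) + a ^ N * b ^ ?k"
    by (rule dvd_add[OF dvd_diff])
  also have "a ^ N * (1 - b ^ ?k) - (a ^ N - 1) + a ^ N * b ^ ?k = 1"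
    by (simp add: algebra_simps)
  finally show False using \<open>\<not> b dvd 1\<close> by contradiction
qed

lemma dvd_mult_power_imp_dvd_total:
  fixes a b m :: "'a::idom"
  assumes "m \<noteq> 0" and nonunits: "\<And>x. \<not> x dvd 1 \<Longrightarrow> m dvd x"
  shows "b dvd a * m ^ k \<Longrightarrow> b dvd a \<or> a dvd b"
proof (induction k)
  case 0
  then show ?case by simp
next
  case (Suc k)
  obtain t where t: "a * m ^ Suc k = b * t" using Suc.prems ..
  show ?case
  proof (cases "t dvd 1")
    case True
    have "a dvd b * t" unfolding t[symmetric] by (rule dvd_triv_left)
    then show ?thesis using dvd_mult_unit_cancel[OF True] by blast
  next
    case False
    then have "m dvd t" by (rule nonunits)
    then obtain t' where "t = m * t'" ..
    with t have "a * m ^ k * m = b * t' * m" by (simp add: ac_simps)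
    then have "a * m ^ k = b * t'" using \<open>m \<noteq> 0\<close> by simp
    then show ?thesis by (intro Suc.IH dvdI)
  qed
qed

lemma emb_eq_iff [simp]: "emb a = emb b \<longleftrightarrow> a = b"
  by (simp add: emb_def eq_fract)

lemma emb_mult: "emb a * emb b = emb (a * b)"
  by (simp add: emb_def)

lemma emb_0 [simp]: "emb 0 = 0"
  by (simp add: emb_def Zero_fract_def)

lemma dvd_of_frac_inv_mult_unit:
  assumes x: "x \<in> frac_inv M" and r: "x * emb m = emb r" and "r dvd 1" and "m' \<in> M"
  shows "m dvd m'"
proof -
  obtain r' where r': "x * emb m' = emb r'"
    using x \<open>m' \<in> M\<close> unfolding frac_inv_def colon_def by blast
  have "emb (m' * r) = emb m' * (x * emb m)" using r by (simp add: emb_mult)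
  also have "\<dots> = (x * emb m') * emb m" by (simp add: ac_simps)
  also have "\<dots> = emb (r' * m)" using r' by (simp add: emb_mult)
  finally have "m dvd m' * r" by simp
  then show "m dvd m'" using dvd_mult_unit_cancel[OF \<open>r dvd 1\<close>] by blast
qed

lemma valuation_ringI:
  assumes "\<And>a b :: 'a::idom. a dvd b \<or> b dvd a"
  shows "valuation_ring TYPE('a)"
  unfolding valuation_ring_def
proof
  fix z :: "'a fract"
  obtain a b where z: "z = Fract a b" and "b \<noteq> 0" by (cases z) blast
  show "z \<in> range emb \<or> inverse z \<in> range emb"
  proof (cases "b dvd a")
    case True
    then obtain c where "a = b * c" ..
    then have "z = emb c" using z \<open>b \<noteq> 0\<close> by (simp add: emb_def eq_fract)
    then show ?thesis by blast
  next
    case False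
    then have "a dvd b" using assms by blast
    then obtain c where "b = a * c" ..
    then have "inverse z = emb c" using z \<open>b \<noteq> 0\<close> by (simp add: emb_def eq_fract)
    then show ?thesis by blast
  qed
qed

locale dvd_ict_bounded =
  fixes N :: nat
  assumes no_dvd_ict_pattern: "\<not> dvd_ict_pattern (a::'a::idom) b f g N"
begin

lemma sum_eq_one_imp_unit:
  fixes a b :: 'a
  assumes "a + b = 1"
  shows "a dvd 1 \<or> b dvd 1"
proof (rule ccontr)
  assume "\<not> (a dvd 1 \<or> b dvd 1)"
  then have nonunits: "\<not> a dvd 1" "\<not> b dvd 1" and nonzero: "a \<noteq> 0" "b \<noteq> 0"
    using assms by auto
  have "b + a = 1" using assms by (simp add: add.commute)
  have "\<not> b ^ N dvd a ^ N * b ^ i - a ^ N * b ^ i'"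
    "\<not> a ^ N dvd b ^ N * a ^ i - b ^ N * a ^ i'" if "i < i'" "i' < N" for i i'
    using not_dvd_power_progression_diff[OF \<open>a + b = 1\<close> nonunits(2) nonzero(2) that]
      not_dvd_power_progression_diff[OF \<open>b + a = 1\<close> nonunits(1) nonzero(1) that] .
  then have "dvd_ict_pattern (a ^ N) (b ^ N) (\<lambda>i. a ^ N * b ^ i) (\<lambda>i. b ^ N * a ^ i) N"
    unfolding dvd_ict_pattern_def by simp
  with no_dvd_ict_pattern show False by blast
qed

lemma one_minus_power_unit:
  fixes s :: 'a
  assumes "\<not> s dvd 1" "0 < k"
  shows "(1 - s ^ k) dvd 1"
proof -
  have "\<not> s ^ k dvd 1" using assms by (meson dvd_power dvd_trans)
  then show ?thesis using sum_eq_one_imp_unit[of "1 - s ^ k" "s ^ k"] by simp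
qed

lemma dvd_progression_diff_imp_dvd:
  fixes s :: 'a
  assumes "\<not> s dvd 1" "i < i'" "d dvd c * s ^ i - c * s ^ i'"
  shows "d dvd c * s ^ i"
proof -
  have "c * s ^ i - c * s ^ i' = c * s ^ i * (1 - s ^ (i' - i))"
    using \<open>i < i'\<close> by (simp add: algebra_simps flip: power_add)
  moreover have "(1 - s ^ (i' - i)) dvd 1"
    using assms(1,2) by (simp add: one_minus_power_unit)
  ultimately show ?thesis using assms(3) dvd_mult_unit_cancel by simp
qed

lemma dvd_or_dvd_mult_power:
  fixes a b s :: 'a
  assumes "\<not> s dvd 1"
  shows "b dvd a * s ^ N \<or> a dvd b * s ^ N"
proof (rule ccontr)
  assume neither: "\<not> ?thesis"
  have "\<not> b dvd a * s ^ i" "\<not> a dvd b * s ^ i" if "i < N" for i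
  proof -
    have "s ^ i dvd s ^ N" using that by (simp add: le_imp_power_dvd)
    then have "a * s ^ i dvd a * s ^ N" "b * s ^ i dvd b * s ^ N" by simp_all
    then show "\<not> b dvd a * s ^ i" "\<not> a dvd b * s ^ i"
      using neither dvd_trans by metis+
  qed
  then have "\<not> b dvd a * s ^ i - a * s ^ i'" "\<not> a dvd b * s ^ i - b * s ^ i'"
    if "i < i'" "i' < N" for i i'
    using dvd_progression_diff_imp_dvd[OF assms \<open>i < i'\<close>] less_trans[OF that] by blast+
  then have "dvd_ict_pattern a b (\<lambda>i. a * s ^ i) (\<lambda>i. b * s ^ i) N"
    unfolding dvd_ict_pattern_def by simp
  with no_dvd_ict_pattern show False by blast
qed

lemma dvd_mem_prime_ideal:
  fixes P :: "'a set"
  assumes P: "prime_ideal P" and "s \<notin> P" "y \<in> P"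
  shows "s dvd y"
proof (cases "s dvd 1")
  case True
  then show ?thesis using one_dvd dvd_trans by blast
next
  case False
  have ideal: "is_ideal P" using P by (simp add: prime_ideal_def)
  then have "s \<noteq> 0" using \<open>s \<notin> P\<close> by (auto simp: is_ideal_def)
  from dvd_or_dvd_mult_power[OF False, of "s ^ Suc N" y] show ?thesis
  proof
    assume "s ^ Suc N dvd y * s ^ N"
    then show ?thesis using \<open>s \<noteq> 0\<close> by (simp add: mult.commute[of s])
  next
    assume "y dvd s ^ Suc N * s ^ N"
    then obtain c where "s ^ Suc N * s ^ N = y * c" ..
    then have "s ^ (Suc N + N) = c * y" by (simp add: power_add ac_simps)
    then have "s ^ (Suc N + N) \<in> P" using ideal \<open>y \<in> P\<close> by (simp add: is_ideal_def)
    then show ?thesis using prime_ideal_power_memD[OF P] \<open>s \<notin> P\<close> by blast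
  qed
qed

lemma colon_prime_ideal_subset_localization:
  fixes P :: "'a set"
  assumes P: "prime_ideal P" and s: "\<not> s dvd 1" "s \<notin> P"
  shows "colon (emb ` P) (emb ` P) \<subseteq> localization P"
proof
  fix x assume x: "x \<in> colon (emb ` P) (emb ` P)"
  obtain a b where x_eq: "x = Fract a b" and "b \<noteq> 0" by (cases x) blast
  have "s \<noteq> 0" using P \<open>s \<notin> P\<close> by (auto simp: prime_ideal_def is_ideal_def)
  have "s ^ N \<notin> P" using prime_ideal_power_memD[OF P] \<open>s \<notin> P\<close> by blast
  from dvd_or_dvd_mult_power[OF s(1), of b a] show "x \<in> localization P"
  proof
    assume "b dvd a * s ^ N"
    then obtain t where "a * s ^ N = b * t" ..
    then have "x = Fract t (s ^ N)"
      using x_eq \<open>b \<noteq> 0\<close> \<open>s \<noteq> 0\<close> by (simp add: eq_fract mult.commute)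
    then show ?thesis using \<open>s ^ N \<notin> P\<close> unfolding localization_def by blast
  next
    assume "a dvd b * s ^ N"
    then obtain t where t: "b * s ^ N = a * t" ..
    then have "t \<noteq> 0" using \<open>b \<noteq> 0\<close> \<open>s \<noteq> 0\<close> by auto
    with t have x_eq': "x = Fract (s ^ N) t"
      using x_eq \<open>b \<noteq> 0\<close> by (simp add: eq_fract mult.commute)
    have "t \<notin> P"
    proof
      assume "t \<in> P"
      then have "x * emb t \<in> emb ` P" using x unfolding colon_def by blast
      moreover have "x * emb t = emb (s ^ N)"
        using x_eq' \<open>t \<noteq> 0\<close> by (simp add: emb_def eq_fract)
      ultimately show False using \<open>s ^ N \<notin> P\<close> by auto
    qed
    with x_eq' show ?thesis unfolding localization_def by blast
  qed
qed

lemma localization_subset_colon_prime_ideal: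
  fixes P :: "'a set"
  assumes P: "prime_ideal P"
  shows "localization P \<subseteq> colon (emb ` P) (emb ` P)"
proof (unfold colon_def, intro subsetI CollectI ballI)
  fix x y assume "x \<in> localization P" "y \<in> emb ` P"
  then obtain a u q where x: "x = Fract a u" "u \<notin> P" and y: "y = emb q" "q \<in> P"
    unfolding localization_def by blast
  have "u \<noteq> 0" using P \<open>u \<notin> P\<close> by (auto simp: prime_ideal_def is_ideal_def)
  obtain z where z: "q = u * z" using dvd_mem_prime_ideal[OF P x(2) y(2)] ..
  then have "z \<in> P" using P y(2) x(2) unfolding prime_ideal_def by blast
  then have "a * z \<in> P" using P by (simp add: prime_ideal_def is_ideal_def)
  moreover have "x * y = emb (a * z)"
    using x y z \<open>u \<noteq> 0\<close> by (simp add: emb_def eq_fract)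
  ultimately show "x * y \<in> emb ` P" by blast
qed

lemma valuation_ring_if_nonunits_principal:
  fixes m :: 'a
  assumes "m \<noteq> 0" "\<not> m dvd 1" "\<And>x. \<not> x dvd 1 \<Longrightarrow> m dvd x"
  shows "valuation_ring TYPE('a)"
proof (rule valuation_ringI)
  fix a b :: 'a
  from dvd_or_dvd_mult_power[OF assms(2), of b a] show "a dvd b \<or> b dvd a"
    using dvd_mult_power_imp_dvd_total[OF assms(1,3)] by blast
qed

lemma frac_inv_maximal_ideal_eq_colon:
  fixes M :: "'a set"
  assumes M: "maximal_ideal M" and "\<not> valuation_ring TYPE('a)"
  shows "frac_inv M = colon (emb ` M) (emb ` M)"
proof
  show "colon (emb ` M) (emb ` M) \<subseteq> frac_inv M"
    unfolding frac_inv_def colon_def by blast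
next
  have mem_M: "t \<in> M \<longleftrightarrow> \<not> t dvd 1" for t
    using maximal_ideal_mem_iff_nonunit[OF sum_eq_one_imp_unit M] .
  show "frac_inv M \<subseteq> colon (emb ` M) (emb ` M)"
  proof (unfold colon_def, intro subsetI CollectI ballI)
    fix x y assume x: "x \<in> frac_inv M" and "y \<in> emb ` M"
    then obtain m where y: "y = emb m" "m \<in> M" by blast
    show "x * y \<in> emb ` M"
    proof (rule ccontr)
      assume not_mem: "x * y \<notin> emb ` M"
      obtain r where r: "x * emb m = emb r"
        using x y unfolding frac_inv_def colon_def by blast
      then have "r \<notin> M" using not_mem y(1) by auto
      then have "r dvd 1" using mem_M[of r] by simp
      have "m \<noteq> 0"
      proof
        assume "m = 0"
        then have "x * y = emb 0" using y(1) by simp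
        moreover have "(0 :: 'a) \<in> M" using mem_M[of 0] by simp
        ultimately show False using not_mem by blast
      qed
      have "\<not> m dvd 1" using mem_M[of m] y(2) by simp
      have "m dvd m'" if "\<not> m' dvd 1" for m'
        using dvd_of_frac_inv_mult_unit[OF x r \<open>r dvd 1\<close>] that mem_M[of m'] by simp
      then have "valuation_ring TYPE('a)"
        using valuation_ring_if_nonunits_principal[OF \<open>m \<noteq> 0\<close> \<open>\<not> m dvd 1\<close>] by blast
      with assms(2) show False ..
    qed
  qed
qed

end

theorem mainTheorem12:
  fixes M :: "'a::idom set"
  assumes "dp_minimal TYPE('a)"
    and "maximal_ideal M"
  shows "(\<forall>P. prime_ideal P \<and> P \<noteq> M \<longrightarrow>
            colon (emb ` P) (emb ` P) = localization P)
       \<and> (\<not> valuation_ring TYPE('a) \<longrightarrow> frac_inv M = colon (emb ` M) (emb ` M))"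
proof -
  obtain N where "\<And>(a::'a) b f g. \<not> dvd_ict_pattern a b f g N"
    using dp_minimal_bounds_dvd_ict_patterns[OF assms(1)] by blast
  then have bounded: "dvd_ict_bounded TYPE('a) N"
    by unfold_locales
  have mem_M: "t \<in> M \<longleftrightarrow> \<not> t dvd 1" for t
    using maximal_ideal_mem_iff_nonunit[OF dvd_ict_bounded.sum_eq_one_imp_unit[OF bounded] assms(2)] .
  have "colon (emb ` P) (emb ` P) = localization P" if P: "prime_ideal P" "P \<noteq> M" for P
  proof -
    have "P \<subseteq> M"
    proof
      fix p assume "p \<in> P"
      then have "\<not> p dvd 1" using ideal_mem_unit_eq_UNIV P(1) unfolding prime_ideal_def by blast
      then show "p \<in> M" using mem_M[of p] by simp
    qed
    then obtain s where "s \<in> M" "s \<notin> P" using P(2) by blast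
    then have "\<not> s dvd 1" using mem_M[of s] by simp
    with \<open>s \<notin> P\<close> show ?thesis
      using dvd_ict_bounded.colon_prime_ideal_subset_localization[OF bounded P(1)]
        dvd_ict_bounded.localization_subset_colon_prime_ideal[OF bounded P(1)]
      by blast
  qed
  then show ?thesis
    using dvd_ict_bounded.frac_inv_maximal_ideal_eq_colon[OF bounded assms(2)] by blast
qed

end
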